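(* Let $\mathcal{A}$ and $\mathcal{B}$ be sharp qubit observables given by unit vectors $\vec a,\vec b\in\mathbb{R}^3$, with a priori probabilities $\eta$ for $\mathcal{A}$ and $1-\eta$ for $\mathcal{B}$, and let $\theta_{\vec a\vec b}$ be the angle between $\vec a$ and $\vec b$. Then the (optimal) success probability of unambiguous identification of $\mathcal{A}$ in two shots is $$P_{\rm succ}=\eta\sin^2\theta_{\vec a\vec b}.$$ That is, the maximum of $\eta\,p^{\mathcal{A}}_\varrho(R)$ over states $\varrho$ on $\mathbb{C}^2\otimes\mathbb{C}^2$ and $R\in\{R_{\rm same},R_{\rm diff}\}$ subject to $p^{\mathcal{B}}_\varrho(R)=0$ equals $\eta\sin^2\theta_{\vec a\vec b}$.
   Context: A sharp qubit observable given by a unit vector $\vec a\in\mathbb{R}^3$ has two outcomes with effects $\mathcal{A}_1=\frac12(I+\vec a\cdot\vec\sigma)$, $\mathcal{A}_2=\frac12(I-\vec a\cdot\vec\sigma)$ on $\mathbb{C}^2$ ($\vec\sigma$ the vector of Pauli matrices); likewise $\mathcal{B}_{1,2}=\frac12(I\pm\vec b\cdot\vec\sigma)$. For a state $\varrho$ on $\mathbb{C}^2\otimes\mathbb{C}^2$, $p^{\mathcal{A}}_\varrho(R_{\rm same})=\mathrm{tr}[\varrho(\mathcal{A}_1\otimes\mathcal{A}_1+\mathcal{A}_2\otimes\mathcal{A}_2)]$ and $p^{\mathcal{A}}_\varrho(R_{\rm diff})=\mathrm{tr}[\varrho(\mathcal{A}_1\otimes\mathcal{A}_2+\mathcal{A}_2\otimes\mathcal{A}_1)]$,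 similarly for $\mathcal{B}$. Unambiguous identification of $\mathcal{A}$ in two shots: the unknown apparatus (known to be $\mathcal{A}$ or $\mathcal{B}$, outcome labels unknown) is applied to both halves of the probe state; one of the two results ("same" or "different") is declared conclusive for "the apparatus is $\mathcal{A}$", which requires it to have probability zero for $\mathcal{B}$, and the other result is inconclusive. The success probability is $\eta$ times the probability of the conclusive result under $\mathcal{A}$. *)

theory Defs
  imports "HOL-Analysis.Analysis"
begin

definition sigma_x :: "complex^2^2" where
  "sigma_x = (\<chi> i j. if i \<noteq> j then 1 else 0)"

definition sigma_y :: "complex^2^2" where
  "sigma_y = (\<chi> i j. if i = 0 \<and> j = 1 then - \<i> else if i = 1 \<and> j = 0 then \<i> else 0)"

definition sigma_z :: "complex^2^2" where
  "sigma_z = (\<chi> i j. if i = j then (if i = 0 then 1 else -1) else 0)"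

definition bloch :: "real^3 \<Rightarrow> complex^2^2" where
  "bloch a = a$1 *\<^sub>R sigma_x + a$2 *\<^sub>R sigma_y + a$3 *\<^sub>R sigma_z"

definition effect1 :: "real^3 \<Rightarrow> complex^2^2" where
  "effect1 a = (1/2) *\<^sub>R (mat 1 + bloch a)"

definition effect2 :: "real^3 \<Rightarrow> complex^2^2" where
  "effect2 a = (1/2) *\<^sub>R (mat 1 - bloch a)"

definition kron :: "complex^2^2 \<Rightarrow> complex^2^2 \<Rightarrow> complex^(2\<times>2)^(2\<times>2)" where
  "kron A B = (\<chi> p q. A$(fst p)$(fst q) * B$(snd p)$(snd q))"

definition trace :: "complex^'n^'n \<Rightarrow> complex" where
  "trace M = (\<Sum>i\<in>UNIV. M$i$i)"

definition is_state :: "complex^(2\<times>2)^(2\<times>2) \<Rightarrow> bool" where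
  "is_state \<rho> \<longleftrightarrow>
     (\<forall>i j. \<rho>$i$j = cnj (\<rho>$j$i)) \<and>
     (\<forall>v :: complex^(2\<times>2). 0 \<le> Re (\<Sum>i\<in>UNIV. \<Sum>j\<in>UNIV. cnj (v$i) * \<rho>$i$j * v$j)) \<and>
     trace \<rho> = 1"

datatype result = R_same | R_diff

definition result_op :: "real^3 \<Rightarrow> result \<Rightarrow> complex^(2\<times>2)^(2\<times>2)" where
  "result_op a R = (case R of
      R_same \<Rightarrow> kron (effect1 a) (effect1 a) + kron (effect2 a) (effect2 a)
    | R_diff \<Rightarrow> kron (effect1 a) (effect2 a) + kron (effect2 a) (effect1 a))"

text \<open>p^a_rho(R) = tr[rho (result operator)] (real for states; we take the real part).\<close>
definition prob :: "real^3 \<Rightarrow> complex^(2\<times>2)^(2\<times>2) \<Rightarrow> result \<Rightarrow> real" where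
  "prob a \<rho> R = Re (trace (\<rho> ** result_op a R))"

definition vec_angle :: "real^3 \<Rightarrow> real^3 \<Rightarrow> real" where
  "vec_angle a b = arccos ((a \<bullet> b) / (norm a * norm b))"

end

theory Submission
  imports Defs
begin

text \<open>Write \<open>A = a\<cdot>\<sigma>\<close>, \<open>B = b\<cdot>\<sigma>\<close>, and let \<open>s = \<plusminus>1\<close> be the sign of the conclusive result
  (same/different), so that its probability is \<open>(1 + s\<langle>A\<otimes>A\<rangle>)/2\<close>. If it has probability zero
  for b, the state is annihilated by \<open>G = B\<otimes>I + s I\<otimes>B\<close>, since \<open>G\<^sup>2 = 2(I + s B\<otimes>B)\<close> has zero
  expectation. Splitting \<open>a = (a\<bullet>b) b + u\<close> with \<open>u \<bottom> b\<close>, this fixes the \<open>B\<otimes>B\<close> part of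
  \<open>\<langle>A\<otimes>A\<rangle>\<close> and kills the mixed part (the anticommutator of G with \<open>U\<otimes>I + s I\<otimes>U\<close> is
  proportional to it), while positivity of \<open>(U\<otimes>I - s I\<otimes>U)\<^sup>2\<close> bounds the \<open>U\<otimes>U\<close> part by
  \<open>\<parallel>u\<parallel>\<^sup>2 = sin\<^sup>2 \<theta>\<close>. This gives the upper bound \<open>sin\<^sup>2 \<theta>\<close>, which is attained by the m = 0
  triplet state along b.\<close>

lemma UNIV_2_zero_one: "(UNIV :: 2 set) = {0, 1}"
proof -
  have "(2::2) = 0" by simp
  then show ?thesis using UNIV_2 by auto
qed

lemma sum_UNIV_2: "sum f (UNIV :: 2 set) = f 0 + f 1"
  by (simp add: UNIV_2_zero_one)

lemma sum_UNIV_2x2: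
  "sum f (UNIV :: (2 \<times> 2) set) = f (0,0) + f (0,1) + f (1,0) + f (1,1)"
proof -
  have "sum f (UNIV :: (2 \<times> 2) set) = (\<Sum>x\<in>UNIV. \<Sum>y\<in>UNIV. f (x,y))"
    unfolding UNIV_Times_UNIV[symmetric] sum.cartesian_product by simp
  then show ?thesis by (simp add: sum_UNIV_2 add.assoc)
qed

lemma forall_2_zero_one: "(\<forall>i::2. P i) \<longleftrightarrow> P 0 \<and> P 1"
  by (metis UNIV_2_zero_one UNIV_I insertE singletonD)

lemma forall_2x2: "(\<forall>p::2 \<times> 2. P p) \<longleftrightarrow> P (0,0) \<and> P (0,1) \<and> P (1,0) \<and> P (1,1)"
  using forall_2_zero_one by auto

lemma sum_swap_3:
  "(\<Sum>i\<in>A. \<Sum>k\<in>B. \<Sum>l\<in>C. f i k l) = (\<Sum>l\<in>C. \<Sum>i\<in>A. \<Sum>k\<in>B. f i k l)"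
proof -
  have "(\<Sum>i\<in>A. \<Sum>k\<in>B. \<Sum>l\<in>C. f i k l) = (\<Sum>i\<in>A. \<Sum>l\<in>C. \<Sum>k\<in>B. f i k l)"
    by (rule sum.cong[OF refl], rule sum.swap)
  also have "\<dots> = (\<Sum>l\<in>C. \<Sum>i\<in>A. \<Sum>k\<in>B. f i k l)" by (rule sum.swap)
  finally show ?thesis .
qed


lemma matrix_add_rdistrib: "((A::'a::semiring_1^'n^'m) + B) ** C = A ** C + B ** C"
  by (simp add: vec_eq_iff matrix_matrix_mult_def sum.distrib algebra_simps)

lemma matrix_diff_ldistrib: "(A::'a::ring_1^'n^'m) ** (B - C) = A ** B - A ** C"
  by (simp add: vec_eq_iff matrix_matrix_mult_def sum_subtractf algebra_simps)

lemma matrix_diff_rdistrib: "((A::'a::ring_1^'n^'m) - B) ** C = A ** C - B ** C"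
  by (simp add: vec_eq_iff matrix_matrix_mult_def sum_subtractf algebra_simps)

lemma matrix_scaleR_left: "(k *\<^sub>R (A::'a::real_algebra_1^'n^'m)) ** B = k *\<^sub>R (A ** B)"
  by (simp add: scalar_matrix_assoc)

lemma matrix_scaleR_right: "(A::'a::real_algebra_1^'n^'m) ** (k *\<^sub>R B) = k *\<^sub>R (A ** B)"
  by (simp add: matrix_scalar_ac scalar_matrix_assoc)

text \<open>The simplifier normalises \<open>X + X\<close> to \<open>2 * X\<close>, an entrywise product with the
  constant matrix 2; this turns it back into a scalar multiple.\<close>

lemma two_times_matrix: "(2::complex^'n^'m) * X = 2 *\<^sub>R X"
  by (simp add: vec_eq_iff scaleR_conv_of_real)

lemmas matrix_mult_distribs = matrix_add_ldistrib matrix_add_rdistrib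
  matrix_diff_ldistrib matrix_diff_rdistrib matrix_scaleR_left matrix_scaleR_right

lemma idempotent_diff:
  fixes P S :: "'a::ring_1^'n^'n"
  assumes "P ** P = P" "S ** S = S" "P ** S = S" "S ** P = S"
  shows "(P - S) ** (P - S) = P - S"
  using assms by (simp add: matrix_diff_ldistrib matrix_diff_rdistrib)

lemma half_involution_idempotent:
  fixes K :: "'a::real_algebra_1^'n^'n"
  assumes "K ** K = mat 1"
  shows "((1/2) *\<^sub>R (mat 1 - K)) ** ((1/2) *\<^sub>R (mat 1 - K)) = (1/2) *\<^sub>R (mat 1 - K)"
proof -
  have "(mat 1 - K) ** (mat 1 - K) = 2 *\<^sub>R (mat 1 - K)"
    using assms by (simp add: matrix_diff_ldistrib matrix_diff_rdistrib scaleR_2)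
  then show ?thesis by (simp add: matrix_scaleR_left matrix_scaleR_right)
qed

lemma trace_add: "trace (A + B) = trace A + trace B"
  by (simp add: trace_def sum.distrib)

lemma trace_diff: "trace (A - B) = trace A - trace B"
  by (simp add: trace_def sum_subtractf)

lemma trace_scaleR: "trace (r *\<^sub>R A) = r *\<^sub>R trace A"
  by (simp add: trace_def scaleR_sum_right)

lemma trace_mult_commute: "trace (A ** B) = trace (B ** A)"
  unfolding trace_def matrix_matrix_mult_def
  by (simp, subst sum.swap) (simp add: mult.commute)

lemma trace_zero [simp]: "trace 0 = 0"
  by (simp add: trace_def)

lemma trace_mat_1: "trace (mat 1 :: complex^'n^'n) = of_nat CARD('n)"
  by (simp add: trace_def mat_def)


section \<open>Hermitian and positive semidefinite matrices\<close>

definition hermitian :: "complex^'n^'n \<Rightarrow> bool" where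
  "hermitian M \<longleftrightarrow> (\<forall>i j. M$i$j = cnj (M$j$i))"

definition sesq_form :: "complex^'n^'n \<Rightarrow> complex^'n \<Rightarrow> complex^'n \<Rightarrow> complex" where
  "sesq_form M x y = (\<Sum>i\<in>UNIV. \<Sum>j\<in>UNIV. cnj (x$i) * M$i$j * y$j)"

definition positive_semidef :: "complex^'n^'n \<Rightarrow> bool" where
  "positive_semidef M \<longleftrightarrow> hermitian M \<and> (\<forall>v. 0 \<le> Re (sesq_form M v v))"

lemma is_state_iff: "is_state \<rho> \<longleftrightarrow> positive_semidef \<rho> \<and> trace \<rho> = 1"
  unfolding is_state_def positive_semidef_def hermitian_def sesq_form_def by blast

lemma hermitian_cnj: "hermitian M \<Longrightarrow> cnj (M$i$j) = M$j$i"
  unfolding hermitian_def by (metis complex_cnj_cnj)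

lemma hermitian_add:
  assumes "hermitian A" "hermitian B"
  shows "hermitian (A + B)"
  unfolding hermitian_def using hermitian_cnj[OF assms(1)] hermitian_cnj[OF assms(2)] by simp

lemma hermitian_diff:
  assumes "hermitian A" "hermitian B"
  shows "hermitian (A - B)"
  unfolding hermitian_def using hermitian_cnj[OF assms(1)] hermitian_cnj[OF assms(2)] by simp

lemma hermitian_scaleR:
  assumes "hermitian A"
  shows "hermitian (r *\<^sub>R A)"
  unfolding hermitian_def using hermitian_cnj[OF assms] by simp

lemma hermitian_mat_1: "hermitian (mat 1)"
  by (simp add: hermitian_def mat_def)

lemma sesq_form_swap: "hermitian M \<Longrightarrow> sesq_form M y x = cnj (sesq_form M x y)"
  unfolding sesq_form_def using hermitian_cnj[of M]
  by (simp add: mult_ac) (rule sum.swap)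

lemma hermitian_mult_eq_0_swap:
  assumes "hermitian A" "hermitian B" "A ** B = 0"
  shows "B ** A = 0"
proof -
  have "(B ** A)$i$j = cnj ((A ** B)$j$i)" for i j
    using hermitian_cnj[OF assms(1)] hermitian_cnj[OF assms(2)]
    by (simp add: matrix_matrix_mult_def mult.commute)
  then show ?thesis using assms(3) by (simp add: vec_eq_iff)
qed

lemma sesq_form_mult_self:
  assumes "hermitian P"
  shows "sesq_form (P ** P) v v = (\<Sum>k\<in>UNIV. cnj ((P *v v)$k) * (P *v v)$k)"
proof -
  have "sesq_form (P ** P) v v = (\<Sum>i\<in>UNIV. \<Sum>j\<in>UNIV. \<Sum>k\<in>UNIV. cnj (v$i) * P$i$k * (P$k$j * v$j))"
    by (simp add: sesq_form_def matrix_matrix_mult_def sum_distrib_left sum_distrib_right mult_ac)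
  also have "\<dots> = (\<Sum>k\<in>UNIV. (\<Sum>i\<in>UNIV. cnj (v$i) * P$i$k) * (\<Sum>j\<in>UNIV. P$k$j * v$j))"
    by (subst sum_swap_3) (simp add: sum_product)
  also have "\<dots> = (\<Sum>k\<in>UNIV. cnj ((P *v v)$k) * (P *v v)$k)"
    using hermitian_cnj[OF assms] by (simp add: matrix_vector_mult_def mult.commute)
  finally show ?thesis .
qed

lemma positive_semidef_if_idempotent:
  assumes "hermitian P" "P ** P = P"
  shows "positive_semidef P"
  using assms sesq_form_mult_self[OF assms(1)]
  by (auto simp: positive_semidef_def Re_sum intro: sum_nonneg)

lemma trace_mult_square_eq_sum:
  assumes "hermitian N"
  shows "trace (R ** (N ** N)) = (\<Sum>l\<in>UNIV. sesq_form R (column l N) (column l N))"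
proof -
  have "trace (R ** (N ** N)) = (\<Sum>i\<in>UNIV. \<Sum>k\<in>UNIV. \<Sum>l\<in>UNIV. R$i$k * (N$k$l * N$l$i))"
    by (simp add: trace_def matrix_matrix_mult_def sum_distrib_left)
  also have "\<dots> = (\<Sum>l\<in>UNIV. sesq_form R (column l N) (column l N))"
    using hermitian_cnj[OF assms] by (subst sum_swap_3) (simp add: sesq_form_def column_def mult_ac)
  finally show ?thesis .
qed

lemma positive_semidef_trace_mult_square_nonneg:
  assumes "positive_semidef R" "hermitian N"
  shows "0 \<le> Re (trace (R ** (N ** N)))"
  using assms by (auto simp: trace_mult_square_eq_sum positive_semidef_def Re_sum intro: sum_nonneg)

text \<open>If the form vanishes at u, nonnegativity along the line x + t u with x = R u forces
  \<open>\<parallel>R u\<parallel>\<^sup>2\<close>, the coefficient of t, to vanish.\<close>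

lemma positive_semidef_mult_vec_eq_0:
  assumes psd: "positive_semidef R" and zero: "Re (sesq_form R u u) = 0"
  shows "R *v u = 0"
proof -
  define x where "x = R *v u"
  define S where "S = (\<Sum>i\<in>UNIV. (cmod (x$i))\<^sup>2)"
  have herm: "hermitian R" using psd by (simp add: positive_semidef_def)
  have "sesq_form R x u = (\<Sum>i\<in>UNIV. cnj (x$i) * x$i)"
    by (simp add: sesq_form_def x_def matrix_vector_mult_def sum_distrib_left mult.assoc)
  then have cross: "Re (sesq_form R x u) = S"
    unfolding S_def cmod_power2 by (simp add: Re_sum power2_eq_square)
  have line: "0 \<le> Re (sesq_form R x x) + 2 * t * S" for t
  proof -
    have "sesq_form R (x + of_real t *s u) (x + of_real t *s u) =
        sesq_form R x x + of_real t * (sesq_form R x u + sesq_form R u x)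
        + of_real (t\<^sup>2) * sesq_form R u u"
      by (simp add: sesq_form_def algebra_simps sum.distrib sum_distrib_left power2_eq_square)
    moreover have "0 \<le> Re (sesq_form R (x + of_real t *s u) (x + of_real t *s u))"
      using psd by (simp add: positive_semidef_def)
    ultimately show ?thesis
      using zero cross sesq_form_swap[OF herm, of u x] by simp
  qed
  have "S = 0"
  proof (rule ccontr)
    assume "S \<noteq> 0"
    moreover have "0 \<le> S" by (simp add: S_def sum_nonneg)
    ultimately have "S > 0" by simp
    then have "2 * (- (\<bar>Re (sesq_form R x x)\<bar> + 1) / (2 * S)) * S = - (\<bar>Re (sesq_form R x x)\<bar> + 1)"
      by simp
    then show False using line[of "- (\<bar>Re (sesq_form R x x)\<bar> + 1) / (2 * S)"] by linarith
  qed
  then have "x = 0"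
    unfolding S_def vec_eq_iff by (subst (asm) sum_nonneg_eq_0_iff) auto
  then show ?thesis by (simp add: x_def)
qed

lemma positive_semidef_mult_eq_0:
  assumes psd: "positive_semidef R" and herm: "hermitian N"
    and zero: "Re (trace (R ** (N ** N))) = 0"
  shows "R ** N = 0"
proof -
  have "(\<Sum>l\<in>UNIV. Re (sesq_form R (column l N) (column l N))) = 0"
    using zero by (simp add: trace_mult_square_eq_sum[OF herm] Re_sum)
  then have "Re (sesq_form R (column l N) (column l N)) = 0" for l
    using psd by (subst (asm) sum_nonneg_eq_0_iff) (auto simp: positive_semidef_def)
  then have "R *v column l N = 0" for l
    using positive_semidef_mult_vec_eq_0[OF psd] by blast
  then show ?thesis
    by (simp add: vec_eq_iff matrix_matrix_mult_def matrix_vector_mult_def column_def)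
qed


section \<open>Pauli matrices\<close>

lemma inner_vec_3: "(u::real^3) \<bullet> v = u$1 * v$1 + u$2 * v$2 + u$3 * v$3"
  by (simp add: inner_vec_def sum_3)

lemma inner_self_eq_1: "norm (b::real^3) = 1 \<Longrightarrow> b \<bullet> b = 1"
  by (simp add: norm_eq_sqrt_inner)

lemma bloch_nth [simp]:
  "bloch u $ 0 $ 0 = complex_of_real (u$3)"
  "bloch u $ 1 $ 1 = - complex_of_real (u$3)"
  "bloch u $ 0 $ 1 = Complex (u$1) (- u$2)"
  "bloch u $ 1 $ 0 = Complex (u$1) (u$2)"
  by (simp_all add: bloch_def sigma_x_def sigma_y_def sigma_z_def complex_eq_iff)

lemma mat_1_2_nth [simp]:
  "(mat 1 :: complex^2^2)$0$0 = 1" "(mat 1 :: complex^2^2)$1$1 = 1"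
  "(mat 1 :: complex^2^2)$0$1 = 0" "(mat 1 :: complex^2^2)$1$0 = 0"
  by (simp_all add: mat_def)

lemma matrix_2_eq_iff:
  "(A::'a^2^2) = B \<longleftrightarrow> A$0$0 = B$0$0 \<and> A$0$1 = B$0$1 \<and> A$1$0 = B$1$0 \<and> A$1$1 = B$1$1"
  by (simp add: vec_eq_iff forall_2_zero_one)

lemma bloch_add: "bloch (u + v) = bloch u + bloch v"
  by (simp add: matrix_2_eq_iff complex_eq_iff)

lemma bloch_scaleR: "bloch (r *\<^sub>R u) = r *\<^sub>R bloch u"
  by (simp add: matrix_2_eq_iff complex_eq_iff)

lemma bloch_anticommutator: "bloch u ** bloch v + bloch v ** bloch u = (2 * (u \<bullet> v)) *\<^sub>R mat 1"
  by (simp add: matrix_2_eq_iff matrix_matrix_mult_def sum_UNIV_2 inner_vec_3 complex_eq_iff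
      algebra_simps)

lemma bloch_square: "bloch u ** bloch u = (u \<bullet> u) *\<^sub>R mat 1"
  by (simp add: matrix_2_eq_iff matrix_matrix_mult_def sum_UNIV_2 inner_vec_3 complex_eq_iff
      algebra_simps power2_eq_square)

lemma hermitian_bloch: "hermitian (bloch u)"
  unfolding hermitian_def by (simp add: forall_2_zero_one complex_eq_iff)

lemma trace_bloch: "trace (bloch u) = 0"
  by (simp add: trace_def sum_UNIV_2)

lemma trace_bloch_mult: "trace (bloch u ** bloch v) = of_real (2 * (u \<bullet> v))"
  by (simp add: trace_def sum_UNIV_2 matrix_matrix_mult_def inner_vec_3 complex_eq_iff algebra_simps)


section \<open>Kronecker products\<close>

lemma kron_mult: "kron A B ** kron C D = kron (A ** C) (B ** D)"
  by (simp add: vec_eq_iff matrix_matrix_mult_def kron_def sum_UNIV_2x2 sum_UNIV_2 algebra_simps)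

lemma kron_add_left: "kron (A + B) C = kron A C + kron B C"
  by (simp add: vec_eq_iff kron_def algebra_simps)

lemma kron_add_right: "kron A (B + C) = kron A B + kron A C"
  by (simp add: vec_eq_iff kron_def algebra_simps)

lemma kron_diff_left: "kron (A - B) C = kron A C - kron B C"
  by (simp add: vec_eq_iff kron_def algebra_simps)

lemma kron_diff_right: "kron A (B - C) = kron A B - kron A C"
  by (simp add: vec_eq_iff kron_def algebra_simps)

lemma kron_scaleR_left: "kron (r *\<^sub>R A) B = r *\<^sub>R kron A B"
  by (simp add: vec_eq_iff kron_def)

lemma kron_scaleR_right: "kron A (r *\<^sub>R B) = r *\<^sub>R kron A B"
  by (simp add: vec_eq_iff kron_def)

lemma kron_minus_left: "kron (- A) B = - kron A B"
  by (simp add: vec_eq_iff kron_def)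

lemma kron_minus_right: "kron A (- B) = - kron A B"
  by (simp add: vec_eq_iff kron_def)

lemmas kron_bilinear = kron_add_left kron_add_right kron_diff_left kron_diff_right
  kron_scaleR_left kron_scaleR_right kron_minus_left kron_minus_right

lemma kron_mat_1: "kron (mat 1) (mat 1) = mat 1"
  by (simp add: vec_eq_iff kron_def mat_def prod_eq_iff)

lemma trace_kron: "trace (kron A B) = trace A * trace B"
  by (simp add: trace_def kron_def sum_UNIV_2x2 sum_UNIV_2 algebra_simps)

lemma hermitian_kron:
  assumes "hermitian A" "hermitian B"
  shows "hermitian (kron A B)"
  unfolding hermitian_def kron_def using hermitian_cnj[OF assms(1)] hermitian_cnj[OF assms(2)]
  by simp


definition expect :: "complex^'n^'n \<Rightarrow> complex^'n^'n \<Rightarrow> real" where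
  "expect \<rho> X = Re (trace (\<rho> ** X))"

lemma expect_add: "expect \<rho> (X + Y) = expect \<rho> X + expect \<rho> Y"
  by (simp add: expect_def matrix_add_ldistrib trace_add)

lemma expect_diff: "expect \<rho> (X - Y) = expect \<rho> X - expect \<rho> Y"
  by (simp add: expect_def matrix_diff_ldistrib trace_diff)

lemma expect_scaleR: "expect \<rho> (r *\<^sub>R X) = r * expect \<rho> X"
  by (simp add: expect_def matrix_scaleR_right trace_scaleR)

lemma expect_mat_1: "trace \<rho> = 1 \<Longrightarrow> expect \<rho> (mat 1) = 1"
  by (simp add: expect_def)

lemmas expect_linear = expect_add expect_diff expect_scaleR

lemma expect_anticommutator_eq_0:
  assumes "\<rho> ** G = 0" "G ** \<rho> = 0"
  shows "expect \<rho> (G ** K + K ** G) = 0"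
proof -
  have "trace (\<rho> ** (K ** G)) = trace (G ** \<rho> ** K)"
    by (metis matrix_mul_assoc trace_mult_commute)
  then show ?thesis using assms by (simp add: expect_def matrix_add_ldistrib trace_add matrix_mul_assoc)
qed

definition result_sign :: "result \<Rightarrow> real" where
  "result_sign R = (case R of R_same \<Rightarrow> 1 | R_diff \<Rightarrow> -1)"

lemma result_sign_square: "result_sign R * result_sign R = 1"
  by (cases R) (simp_all add: result_sign_def)

lemma result_op_eq:
  "result_op a R = (1/2) *\<^sub>R (mat 1 + result_sign R *\<^sub>R kron (bloch a) (bloch a))"
proof -
  have "kron ((1/2) *\<^sub>R (X + Y)) ((1/2) *\<^sub>R (X + s *\<^sub>R Y))
      + kron ((1/2) *\<^sub>R (X - Y)) ((1/2) *\<^sub>R (X - s *\<^sub>R Y))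
      = (1/2) *\<^sub>R (kron X X + s *\<^sub>R kron Y Y)" for X Y and s :: real
    unfolding vec_eq_iff by (simp add: kron_def) (simp add: scaleR_conv_of_real algebra_simps)
  from this[where X = "mat 1" and Y = "bloch a" and s = 1]
    this[where X = "mat 1" and Y = "bloch a" and s = "-1"]
  show ?thesis
    by (cases R) (simp_all add: result_op_def result_sign_def effect1_def effect2_def kron_mat_1)
qed

lemma prob_eq:
  assumes "trace \<rho> = 1"
  shows "prob a \<rho> R = (1 + result_sign R * expect \<rho> (kron (bloch a) (bloch a))) / 2"
  using assms by (simp add: prob_def result_op_eq flip: expect_def) (simp add: expect_linear expect_mat_1)


section \<open>An upper bound for the conclusive probability\<close>

definition collective :: "real \<Rightarrow> complex^2^2 \<Rightarrow> complex^(2\<times>2)^(2\<times>2)" where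
  "collective t X = kron X (mat 1) + t *\<^sub>R kron (mat 1) X"

lemma hermitian_collective: "hermitian X \<Longrightarrow> hermitian (collective t X)"
  unfolding collective_def
  by (intro hermitian_add hermitian_scaleR hermitian_kron hermitian_mat_1)

lemma collective_bloch_square:
  "collective t (bloch u) ** collective t (bloch u)
     = ((1 + t * t) * (u \<bullet> u)) *\<^sub>R mat 1 + (2 * t) *\<^sub>R kron (bloch u) (bloch u)"
  by (simp add: collective_def matrix_mult_distribs kron_mult bloch_square kron_bilinear kron_mat_1
      algebra_simps two_times_matrix)

lemma collective_bloch_anticommutator:
  assumes "u \<bullet> v = 0"
  shows "collective t (bloch u) ** collective t (bloch v) + collective t (bloch v) ** collective t (bloch u)
     = (2 * t) *\<^sub>R (kron (bloch u) (bloch v) + kron (bloch v) (bloch u))"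
proof -
  have "bloch v ** bloch u = - (bloch u ** bloch v)"
    using bloch_anticommutator[of u v] assms by (simp add: add_eq_0_iff2)
  then show ?thesis
    by (simp add: collective_def matrix_mult_distribs kron_mult kron_bilinear algebra_simps
        two_times_matrix)
qed

lemma annihilates_collective_if_prob_eq_0:
  assumes st: "is_state \<rho>" and nb: "norm b = 1" and zero: "prob b \<rho> R = 0"
  shows "\<rho> ** collective (result_sign R) (bloch b) = 0"
proof -
  let ?\<sigma> = "result_sign R" and ?G = "collective (result_sign R) (bloch b)"
  have tr: "trace \<rho> = 1" and psd: "positive_semidef \<rho>" using st by (simp_all add: is_state_iff)
  have "?\<sigma> * expect \<rho> (kron (bloch b) (bloch b)) = -1"
    using zero by (simp add: prob_eq[OF tr])
  moreover have "?G ** ?G = 2 *\<^sub>R mat 1 + (2 * ?\<sigma>) *\<^sub>R kron (bloch b) (bloch b)"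
    by (simp add: collective_bloch_square result_sign_square inner_self_eq_1[OF nb])
  ultimately have "Re (trace (\<rho> ** (?G ** ?G))) = 0"
    by (simp flip: expect_def add: expect_linear expect_mat_1[OF tr])
  then show ?thesis
    using positive_semidef_mult_eq_0[OF psd hermitian_collective[OF hermitian_bloch]] by blast
qed

lemma expect_kron_cross_eq_0:
  assumes st: "is_state \<rho>" and nb: "norm b = 1" and zero: "prob b \<rho> R = 0" and orth: "b \<bullet> u = 0"
  shows "expect \<rho> (kron (bloch b) (bloch u) + kron (bloch u) (bloch b)) = 0"
proof -
  let ?\<sigma> = "result_sign R" and ?G = "collective (result_sign R) (bloch b)"
  have "\<rho> ** ?G = 0" by (rule annihilates_collective_if_prob_eq_0[OF assms(1-3)])
  moreover from this have "?G ** \<rho> = 0"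
    using hermitian_mult_eq_0_swap st hermitian_collective[OF hermitian_bloch]
    by (auto simp: is_state_iff positive_semidef_def)
  ultimately have "expect \<rho> (?G ** collective ?\<sigma> (bloch u) + collective ?\<sigma> (bloch u) ** ?G) = 0"
    by (rule expect_anticommutator_eq_0)
  then have "(2 * ?\<sigma>) * expect \<rho> (kron (bloch b) (bloch u) + kron (bloch u) (bloch b)) = 0"
    by (simp add: collective_bloch_anticommutator[OF orth] expect_scaleR)
  moreover have "?\<sigma> \<noteq> 0" using result_sign_square[of R] by auto
  ultimately show ?thesis by simp
qed

lemma expect_kron_square_le:
  assumes psd: "positive_semidef \<rho>" and tr: "trace \<rho> = 1" and sign: "t * t = 1"
  shows "t * expect \<rho> (kron (bloch u) (bloch u)) \<le> u \<bullet> u"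
proof -
  let ?N = "collective (- t) (bloch u)"
  have "0 \<le> Re (trace (\<rho> ** (?N ** ?N)))"
    by (rule positive_semidef_trace_mult_square_nonneg[OF psd hermitian_collective[OF hermitian_bloch]])
  also have "Re (trace (\<rho> ** (?N ** ?N))) = 2 * (u \<bullet> u) - 2 * t * expect \<rho> (kron (bloch u) (bloch u))"
    using sign by (simp flip: expect_def add: collective_bloch_square expect_linear expect_mat_1[OF tr])
  finally show ?thesis by simp
qed

lemma prob_le_if_prob_eq_0:
  assumes st: "is_state \<rho>" and na: "norm a = 1" and nb: "norm b = 1" and zero: "prob b \<rho> R = 0"
  shows "prob a \<rho> R \<le> 1 - (a \<bullet> b)\<^sup>2"
proof -
  define c where "c = a \<bullet> b"
  define u where "u = a - c *\<^sub>R b"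
  let ?\<sigma> = "result_sign R" and ?E = "\<lambda>x y. expect \<rho> (kron (bloch x) (bloch y))"
  have tr: "trace \<rho> = 1" and psd: "positive_semidef \<rho>" using st by (simp_all add: is_state_iff)
  have bb: "b \<bullet> b = 1" and aa: "a \<bullet> a = 1" using na nb by (simp_all add: inner_self_eq_1)
  have orth: "b \<bullet> u = 0" by (simp add: u_def c_def inner_diff_right bb inner_commute)
  have uu: "u \<bullet> u = 1 - c\<^sup>2"
    by (simp add: u_def c_def inner_diff_left inner_diff_right aa bb inner_commute power2_eq_square)
  have "bloch a = c *\<^sub>R bloch b + bloch u" by (simp add: u_def bloch_add[symmetric] bloch_scaleR[symmetric])
  then have "?E a a = c\<^sup>2 * ?E b b + c * expect \<rho> (kron (bloch b) (bloch u) + kron (bloch u) (bloch b)) + ?E u u"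
    by (simp add: kron_bilinear expect_linear power2_eq_square algebra_simps)
  then have "?\<sigma> * ?E a a = c\<^sup>2 * (?\<sigma> * ?E b b) + ?\<sigma> * ?E u u"
    by (simp add: expect_kron_cross_eq_0[OF st nb zero orth] algebra_simps)
  moreover have "?\<sigma> * ?E b b = -1" using zero by (simp add: prob_eq[OF tr])
  moreover have "?\<sigma> * ?E u u \<le> 1 - c\<^sup>2"
    using expect_kron_square_le[OF psd tr result_sign_square] uu by metis
  ultimately have "?\<sigma> * ?E a a \<le> 1 - 2 * c\<^sup>2" by simp
  then show ?thesis by (simp add: prob_eq[OF tr] c_def)
qed


section \<open>An optimal state\<close>

text \<open>\<open>singlet\<close> is the projector onto \<open>(|01\<rangle> - |10\<rangle>)/\<surd>2\<close>; its entries are \<open>\<psi>\<^sub>p \<psi>\<^sub>q\<close>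
  with \<open>\<psi> = singlet_amp / \<surd>2\<close>.\<close>

definition singlet_amp :: "2 \<times> 2 \<Rightarrow> real" where
  "singlet_amp p = (if p = (0,1) then 1 else if p = (1,0) then -1 else 0)"

definition singlet :: "complex^(2\<times>2)^(2\<times>2)" where
  "singlet = (\<chi> p q. complex_of_real (singlet_amp p * singlet_amp q / 2))"

lemma singlet_amp_simps [simp]:
  "singlet_amp (0,0) = 0" "singlet_amp (0,1) = 1" "singlet_amp (1,0) = -1" "singlet_amp (1,1) = 0"
  by (simp_all add: singlet_amp_def)

lemma hermitian_singlet: "hermitian singlet"
  by (simp add: hermitian_def singlet_def)

lemma singlet_idempotent: "singlet ** singlet = singlet"
  unfolding vec_eq_iff forall_2x2 by (simp add: matrix_matrix_mult_def sum_UNIV_2x2 singlet_def)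

lemma trace_singlet: "trace singlet = 1"
  by (simp add: trace_def sum_UNIV_2x2 singlet_def)

lemma kron_bloch_mult_singlet: "kron (bloch u) (bloch u) ** singlet = - (u \<bullet> u) *\<^sub>R singlet"
  unfolding vec_eq_iff forall_2x2
  by (simp add: matrix_matrix_mult_def sum_UNIV_2x2 kron_def singlet_def inner_vec_3 complex_eq_iff
      algebra_simps)

lemma singlet_mult_kron_bloch: "singlet ** kron (bloch u) (bloch u) = - (u \<bullet> u) *\<^sub>R singlet"
  unfolding vec_eq_iff forall_2x2
  by (simp add: matrix_matrix_mult_def sum_UNIV_2x2 kron_def singlet_def inner_vec_3 complex_eq_iff
      algebra_simps)

text \<open>The m = 0 triplet state along b: \<open>(I - B\<otimes>B)/2\<close> projects onto the span of the two
  product states with opposite b-outcomes, which contains the singlet.\<close>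

definition triplet_zero :: "real^3 \<Rightarrow> complex^(2\<times>2)^(2\<times>2)" where
  "triplet_zero b = (1/2) *\<^sub>R (mat 1 - kron (bloch b) (bloch b)) - singlet"

lemma triplet_zero_idempotent:
  assumes "norm b = 1"
  shows "triplet_zero b ** triplet_zero b = triplet_zero b"
proof -
  let ?K = "kron (bloch b) (bloch b)" and ?P = "(1/2) *\<^sub>R (mat 1 - kron (bloch b) (bloch b))"
  have KK: "?K ** ?K = mat 1"
    using assms by (simp add: kron_mult bloch_square inner_self_eq_1 kron_scaleR_left
        kron_scaleR_right kron_mat_1)
  have KS: "?K ** singlet = - singlet" and SK: "singlet ** ?K = - singlet"
    using assms by (simp_all add: kron_bloch_mult_singlet singlet_mult_kron_bloch inner_self_eq_1)
  have "?P ** ?P = ?P"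
    using half_involution_idempotent[OF KK] .
  moreover have "?P ** singlet = singlet" and "singlet ** ?P = singlet"
    by (simp_all add: matrix_mult_distribs KS SK scaleR_2[symmetric])
  ultimately show ?thesis
    unfolding triplet_zero_def using idempotent_diff singlet_idempotent by blast
qed

lemma is_state_triplet_zero: "norm b = 1 \<Longrightarrow> is_state (triplet_zero b)"
proof -
  assume nb: "norm b = 1"
  have herm: "hermitian (triplet_zero b)"
    unfolding triplet_zero_def
    by (intro hermitian_diff hermitian_scaleR hermitian_mat_1 hermitian_kron hermitian_bloch
        hermitian_singlet)
  have "trace (triplet_zero b) = 1"
    by (simp add: triplet_zero_def trace_diff trace_scaleR trace_mat_1 trace_kron trace_bloch
        trace_singlet) (simp add: scaleR_conv_of_real)
  then show ?thesis
    using positive_semidef_if_idempotent[OF herm triplet_zero_idempotent[OF nb]]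
    by (simp add: is_state_iff)
qed

lemma expect_triplet_zero_kron:
  "expect (triplet_zero b) (kron (bloch a) (bloch a)) = a \<bullet> a - 2 * (a \<bullet> b)\<^sup>2"
  by (simp add: expect_def triplet_zero_def matrix_mult_distribs kron_mult trace_add trace_diff trace_scaleR
      trace_kron trace_bloch trace_bloch_mult singlet_mult_kron_bloch trace_singlet
      inner_commute[of b a] power2_eq_square)


lemma prob_triplet_zero_same:
  assumes "norm a = 1" "norm b = 1"
  shows "prob a (triplet_zero b) R_same = 1 - (a \<bullet> b)\<^sup>2"
  using assms is_state_triplet_zero[OF assms(2)]
  by (simp add: prob_eq is_state_iff result_sign_def expect_triplet_zero_kron inner_self_eq_1)


lemma sin_vec_angle_square:
  assumes "norm a = 1" "norm b = 1"
  shows "(sin (vec_angle a b))\<^sup>2 = 1 - (a \<bullet> b)\<^sup>2"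
proof -
  have "\<bar>a \<bullet> b\<bar> \<le> 1" using Cauchy_Schwarz_ineq2[of a b] assms by simp
  then show ?thesis
    using assms by (simp add: vec_angle_def sin_arccos abs_square_le_1)
qed

theorem proposition5:
  fixes a b :: "real^3" and \<eta> :: real
  assumes "norm a = 1" and "norm b = 1"
    and "0 \<le> \<eta>" and "\<eta> \<le> 1"
  shows "(\<exists>\<rho> R. is_state \<rho> \<and> prob b \<rho> R = 0 \<and>
            \<eta> * prob a \<rho> R = \<eta> * (sin (vec_angle a b))^2)
       \<and> (\<forall>\<rho> R. is_state \<rho> \<and> prob b \<rho> R = 0 \<longrightarrow>
            \<eta> * prob a \<rho> R \<le> \<eta> * (sin (vec_angle a b))^2)"
proof
  have "prob b (triplet_zero b) R_same = 0"
    using prob_triplet_zero_same[OF assms(2) assms(2)] assms(2) by (simp add: inner_self_eq_1)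
  then show "\<exists>\<rho> R. is_state \<rho> \<and> prob b \<rho> R = 0 \<and> \<eta> * prob a \<rho> R = \<eta> * (sin (vec_angle a b))^2"
    using is_state_triplet_zero[OF assms(2)] prob_triplet_zero_same[OF assms(1,2)]
      sin_vec_angle_square[OF assms(1,2)] by metis
  show "\<forall>\<rho> R. is_state \<rho> \<and> prob b \<rho> R = 0 \<longrightarrow> \<eta> * prob a \<rho> R \<le> \<eta> * (sin (vec_angle a b))^2"
    using prob_le_if_prob_eq_0[OF _ assms(1,2)] sin_vec_angle_square[OF assms(1,2)] assms(3)
    by (simp add: mult_left_mono)
qed

end
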